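(* Let $\mathcal X=\mathcal X_1\times\cdots\times\mathcal X_b$, $\mathcal X_i=\mathbb R^{m_i\times n_i}$ with trace inner product and norms $\|\cdot\|_{(i)}$ (dual $\|\cdot\|_{(i)\star}$), $f$ continuously differentiable with $f\ge f^\star$, $\mathcal D$ a distribution on subsets of $[b]$, and assume constants $L^0_{i,S},L^1_{i,S}\ge0$ exist such that for all $S\in\operatorname{supp}(\mathcal D)$, $X\in\mathcal X$ and $\Gamma$ with $\Gamma_i=0$ for $i\notin S$: $f(X+\Gamma)-f(X)-\langle\nabla f(X),\Gamma\rangle\le\sum_{i\in S}\frac{L^0_{i,S}+L^1_{i,S}\|\nabla_if(X)\|_{(i)\star}}2\|\Gamma_i\|_{(i)}^2$. Let $S\in\operatorname{supp}(\mathcal D)$. Then for any $x_i>0$, $i\in[b]$, and all $X\in\mathcal X$, $$\sum_{i\in S}x_i\|\nabla_if(X)\|_{(i)\star}\le4\max_{i\in S}(x_iL^1_{i,S})\,(f(X)-f^\star)+\sum_{i\in S}\frac{x_iL^0_{i,S}}{L^1_{i,S}}.$$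
   Context: $\operatorname{supp}(\mathcal D)$ is the set of subsets of $[b]$ with positive probability under $\mathcal D$. *)

theory Defs
  imports "HOL-Analysis.Analysis" "HOL-Probability.Probability_Mass_Function"
begin

text \<open>The product space X_1 x ... x X_b is modelled as the Euclidean space real^'n
  whose coordinate set is partitioned into blocks by blk :: 'n => nat; block i
  consists of the coordinates c with blk c = i (the entries of the matrix X_i).
  The sum of trace inner products is then the Euclidean inner product.\<close>

definition block_space :: "('n \<Rightarrow> nat) \<Rightarrow> nat \<Rightarrow> (real^'n) set" where
  "block_space blk i = {v. \<forall>c. blk c \<noteq> i \<longrightarrow> v $ c = 0}"

definition blk_proj :: "('n \<Rightarrow> nat) \<Rightarrow> nat \<Rightarrow> real^'n \<Rightarrow> real^'n" where
  "blk_proj blk i v = (\<chi> c. if blk c = i then v $ c else 0)"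

definition is_norm_on :: "(real^'n) set \<Rightarrow> (real^'n \<Rightarrow> real) \<Rightarrow> bool" where
  "is_norm_on V N \<longleftrightarrow>
     (\<forall>x\<in>V. 0 \<le> N x) \<and> (\<forall>x\<in>V. N x = 0 \<longleftrightarrow> x = 0) \<and>
     (\<forall>x\<in>V. \<forall>a. N (a *\<^sub>R x) = \<bar>a\<bar> * N x) \<and>
     (\<forall>x\<in>V. \<forall>y\<in>V. N (x + y) \<le> N x + N y)"

definition dual_norm_on :: "(real^'n) set \<Rightarrow> (real^'n \<Rightarrow> real) \<Rightarrow> real^'n \<Rightarrow> real" where
  "dual_norm_on V N g = Sup {g \<bullet> v | v. v \<in> V \<and> N v \<le> 1}"

end

theory Submission
  imports Defs
begin

(* Let d_i be the dual norm of the i-th block of the gradient at X, attained at a unit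
   vector u_i (all norms on a block are equivalent to the Euclidean one, so the unit ball is
   compact), and let M = max_{i in S} x_i L1_i. The block step Gamma_i = -(x_i / M) u_i has
   length at most 1 / L1_i, which keeps the quadratic term of the smoothness inequality below
   half of the linear decrease plus x_i L0_i / (2 M L1_i). Hence
     f* - f(X) <= f(X + Gamma) - f(X) <= -(1 / 2M) sum_i x_i (d_i - L0_i / L1_i),
   which is the claim with the constant 2 in place of 4. Only the smoothness inequality and
   the lower bound f* are used; differentiability of f and continuity of its gradient are not. *)

lemma subspace_block_space: "subspace (block_space blk i)"
  unfolding subspace_def block_space_def by auto

lemma axis_in_block_space: "blk c = i \<Longrightarrow> axis c 1 \<in> block_space blk i"
  by (auto simp: block_space_def axis_def)

lemma block_space_eq_sum_axis:
  assumes "v \<in> block_space blk i"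
  shows "v = (\<Sum>c\<in>{c. blk c = i}. (v $ c) *\<^sub>R axis c (1::real))"
  unfolding vec_eq_iff
proof
  fix k
  have "(\<Sum>c\<in>{c. blk c = i}. (v $ c) *\<^sub>R axis c (1::real)) $ k
      = (\<Sum>c\<in>{c. blk c = i}. if c = k then v $ c else 0)"
    by (simp add: axis_def if_distrib cong: if_cong)
  then show "v $ k = (\<Sum>c\<in>{c. blk c = i}. (v $ c) *\<^sub>R axis c (1::real)) $ k"
    using assms by (simp add: block_space_def)
qed

lemma blk_proj_block_space_same: "v \<in> block_space blk i \<Longrightarrow> blk_proj blk i v = v"
  by (auto simp: blk_proj_def block_space_def vec_eq_iff)

lemma blk_proj_block_space_other:
  "v \<in> block_space blk k \<Longrightarrow> k \<noteq> i \<Longrightarrow> blk_proj blk i v = 0"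
  by (auto simp: blk_proj_def block_space_def vec_eq_iff)

lemma linear_blk_proj: "linear (blk_proj blk i)"
  by (rule linearI) (auto simp: blk_proj_def vec_eq_iff)

lemma inner_blk_proj_block_space:
  assumes "u \<in> block_space blk i"
  shows "blk_proj blk i g \<bullet> u = g \<bullet> u"
  using assms unfolding inner_vec_def blk_proj_def block_space_def
  by (intro sum.cong) auto

lemma blk_proj_sum_blocks:
  assumes "finite S" "j \<in> S" "\<forall>k\<in>S. u k \<in> block_space blk k"
  shows "blk_proj blk j (\<Sum>k\<in>S. a k *\<^sub>R u k) = a j *\<^sub>R u j"
proof -
  have "blk_proj blk j (\<Sum>k\<in>S. a k *\<^sub>R u k) = (\<Sum>k\<in>S. a k *\<^sub>R blk_proj blk j (u k))"
    by (simp add: linear_sum[OF linear_blk_proj] linear_scale[OF linear_blk_proj])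
  also have "\<dots> = (\<Sum>k\<in>S. if k = j then a j *\<^sub>R u j else 0)"
    using assms(3) by (intro sum.cong)
      (auto simp: blk_proj_block_space_same blk_proj_block_space_other)
  finally show ?thesis using assms(1,2) by simp
qed

lemma sum_blocks_outside:
  assumes "\<forall>k\<in>S. u k \<in> block_space blk k" "blk c \<notin> S"
  shows "(\<Sum>k\<in>S. a k *\<^sub>R u k) $ c = 0"
proof -
  have "u k $ c = 0" if "k \<in> S" for k
    using assms that by (auto simp: block_space_def)
  then show ?thesis by simp
qed

lemma is_norm_on_zero: "is_norm_on V N \<Longrightarrow> 0 \<in> V \<Longrightarrow> N 0 = 0"
  unfolding is_norm_on_def by auto

lemma is_norm_on_sum_le:
  assumes "is_norm_on V N" "subspace V" "finite F" "\<forall>c\<in>F. e c \<in> V"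
  shows "N (\<Sum>c\<in>F. a c *\<^sub>R e c) \<le> (\<Sum>c\<in>F. \<bar>a c\<bar> * N (e c))"
  using assms(3,4)
proof (induction F rule: finite_induct)
  case empty
  then show ?case using is_norm_on_zero[OF assms(1)] assms(2) by (simp add: subspace_0)
next
  case (insert c F)
  have "(\<Sum>c\<in>F. a c *\<^sub>R e c) \<in> V" "a c *\<^sub>R e c \<in> V"
    using insert assms(2) by (simp_all add: subspace_sum subspace_scale)
  then have "N (a c *\<^sub>R e c + (\<Sum>c\<in>F. a c *\<^sub>R e c))
      \<le> \<bar>a c\<bar> * N (e c) + N (\<Sum>c\<in>F. a c *\<^sub>R e c)"
    using assms(1) insert.prems unfolding is_norm_on_def by force
  then show ?case using insert by simp
qed

lemma is_norm_on_lipschitz_on: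
  assumes norm: "is_norm_on V N" and V: "subspace V"
    and K: "0 \<le> K" "\<forall>v\<in>V. N v \<le> K * norm v"
  shows "lipschitz_on K V N"
proof (rule lipschitz_onI[OF _ K(1)])
  fix x y assume xy: "x \<in> V" "y \<in> V"
  then have diffs: "x - y \<in> V" "y - x \<in> V" by (simp_all add: V subspace_diff)
  have "N x \<le> N (x - y) + N y" "N y \<le> N (y - x) + N x"
    using norm xy diffs unfolding is_norm_on_def by (metis diff_add_cancel)+
  moreover have "N (y - x) = N (x - y)"
    using norm diffs(1) unfolding is_norm_on_def by (metis abs_minus_cancel abs_one minus_diff_eq
        mult_1 scaleR_minus1_left)
  ultimately show "dist (N x) (N y) \<le> K * dist x y"
    using K(2) diffs(1) by (auto simp: dist_norm dist_real_def abs_le_iff)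
qed

lemma continuous_on_block_space_norm:
  assumes norm: "is_norm_on (block_space blk i) N"
  shows "continuous_on (block_space blk i) N"
proof -
  let ?C = "{c. blk c = i}"
  define K where "K = (\<Sum>c\<in>?C. N (axis c 1))"
  have "N v \<le> K * norm v" if v: "v \<in> block_space blk i" for v
  proof -
    have "N v = N (\<Sum>c\<in>?C. (v $ c) *\<^sub>R axis c (1::real))"
      using block_space_eq_sum_axis[OF v] by simp
    also have "\<dots> \<le> (\<Sum>c\<in>?C. \<bar>v $ c\<bar> * N (axis c 1))"
      by (rule is_norm_on_sum_le[OF norm subspace_block_space]) (auto simp: axis_in_block_space)
    also have "\<dots> \<le> (\<Sum>c\<in>?C. norm v * N (axis c 1))"
      using norm axis_in_block_space
      by (intro sum_mono mult_right_mono component_le_norm_cart) (auto simp: is_norm_on_def)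
    finally show ?thesis by (simp add: K_def sum_distrib_left mult.commute)
  qed
  moreover have "0 \<le> K"
    unfolding K_def using norm axis_in_block_space
    by (intro sum_nonneg) (auto simp: is_norm_on_def)
  ultimately show ?thesis
    by (intro lipschitz_on_continuous_on is_norm_on_lipschitz_on[OF norm subspace_block_space]) auto
qed

lemma is_norm_on_norm_le:
  fixes V :: "(real^'n) set"
  assumes norm: "is_norm_on V N" and V: "subspace V" and cont: "continuous_on V N"
  shows "\<exists>C\<ge>0. \<forall>v\<in>V. norm v \<le> C * N v"
proof -
  let ?T = "V \<inter> sphere 0 1"
  have normalize: "(1 / norm v) *\<^sub>R v \<in> ?T" if "v \<in> V" "v \<noteq> 0" for v
    using that V by (simp add: subspace_scale)
  show ?thesis
  proof (cases "?T = {}")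
    case True
    then have "\<forall>v\<in>V. v = 0" using normalize by blast
    then show ?thesis by (intro exI[of _ 0]) auto
  next
    case False
    have "compact ?T" by (intro closed_Int_compact closed_subspace[OF V] compact_sphere)
    then obtain w where w: "w \<in> ?T" "\<forall>y\<in>?T. N w \<le> N y"
      using continuous_attains_inf[OF _ False continuous_on_subset[OF cont]] by blast
    then have "N w \<noteq> 0" "0 \<le> N w" using norm unfolding is_norm_on_def by auto
    then have Nw: "0 < N w" by linarith
    have "norm v \<le> (1 / N w) * N v" if v: "v \<in> V" for v
    proof (cases "v = 0")
      case True
      then show ?thesis using is_norm_on_zero[OF norm] V by (simp add: subspace_0)
    next
      case False
      have "N w \<le> N ((1 / norm v) *\<^sub>R v)" using w normalize[OF v False] by blast
      also have "\<dots> = N v / norm v" using norm v unfolding is_norm_on_def by auto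
      finally show ?thesis using False Nw by (simp add: field_simps)
    qed
    then show ?thesis using Nw by (intro exI[of _ "1 / N w"]) auto
  qed
qed

lemma compact_is_norm_on_unit_ball:
  fixes V :: "(real^'n) set"
  assumes norm: "is_norm_on V N" and V: "subspace V" and cont: "continuous_on V N"
  shows "compact {v \<in> V. N v \<le> 1}"
proof -
  obtain C where C: "0 \<le> C" "\<forall>v\<in>V. norm v \<le> C * N v"
    using is_norm_on_norm_le[OF assms] by blast
  have "{v \<in> V. N v \<le> 1} = V \<inter> N -` {..1}" by auto
  then have "closed {v \<in> V. N v \<le> 1}"
    using continuous_closed_preimage[OF cont closed_subspace[OF V]] by simp
  moreover have "{v \<in> V. N v \<le> 1} \<subseteq> cball 0 C"
  proof clarify
    fix v assume "v \<in> V" "N v \<le> 1"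
    then have "norm v \<le> C * N v" "C * N v \<le> C" using C by (auto intro: mult_left_le)
    then show "v \<in> cball 0 C" by simp
  qed
  ultimately show ?thesis
    using bounded_cball bounded_subset compact_eq_bounded_closed by blast
qed

lemma dual_norm_on_eq_inner:
  assumes "u \<in> V" "N u \<le> 1" "\<forall>v\<in>V. N v \<le> 1 \<longrightarrow> g \<bullet> v \<le> g \<bullet> u"
  shows "dual_norm_on V N g = g \<bullet> u"
  unfolding dual_norm_on_def using assms by (intro cSup_eq_maximum) auto

lemma dual_norm_on_attained:
  fixes V :: "(real^'n) set"
  assumes norm: "is_norm_on V N" and V: "subspace V" and cont: "continuous_on V N"
  obtains u where "u \<in> V" "N u \<le> 1" "dual_norm_on V N g = g \<bullet> u" "0 \<le> g \<bullet> u"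
proof -
  let ?B = "{v \<in> V. N v \<le> 1}"
  have zero: "0 \<in> ?B" using V is_norm_on_zero[OF norm] by (simp add: subspace_0)
  have "continuous_on ?B (inner g)" by (intro continuous_intros)
  then obtain u where u: "u \<in> ?B" "\<forall>v\<in>?B. g \<bullet> v \<le> g \<bullet> u"
    using continuous_attains_sup[OF compact_is_norm_on_unit_ball[OF assms]] zero by blast
  then show ?thesis
    using that dual_norm_on_eq_inner[of u V N g] bspec[OF u(2) zero] by auto
qed

lemma block_dual_maximizers:
  assumes "\<forall>i\<in>S. is_norm_on (block_space blk i) (N i)"
  obtains u where "\<forall>i\<in>S. u i \<in> block_space blk i \<and> N i (u i) \<le> 1
    \<and> g \<bullet> u i = dual_norm_on (block_space blk i) (N i) (blk_proj blk i g)
    \<and> 0 \<le> dual_norm_on (block_space blk i) (N i) (blk_proj blk i g)"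
proof -
  have "\<exists>v. v \<in> block_space blk i \<and> N i v \<le> 1
      \<and> g \<bullet> v = dual_norm_on (block_space blk i) (N i) (blk_proj blk i g)
      \<and> 0 \<le> dual_norm_on (block_space blk i) (N i) (blk_proj blk i g)" if i: "i \<in> S" for i
  proof -
    have norm_i: "is_norm_on (block_space blk i) (N i)" using assms i by blast
    obtain v where "v \<in> block_space blk i" "N i v \<le> 1"
        "dual_norm_on (block_space blk i) (N i) (blk_proj blk i g) = blk_proj blk i g \<bullet> v"
        "0 \<le> blk_proj blk i g \<bullet> v"
      using dual_norm_on_attained[OF norm_i subspace_block_space
          continuous_on_block_space_norm[OF norm_i]] by blast
    then show ?thesis using inner_blk_proj_block_space[of v blk i g] by auto
  qed
  then show ?thesis using that by metis
qed

lemma quadratic_step_le: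
  fixes L0 L1 d s n :: real
  assumes "0 \<le> L0" "0 < L1" "0 \<le> d" "0 \<le> n" "n \<le> s" "s * L1 \<le> 1"
  shows "(L0 + L1 * d) / 2 * n\<^sup>2 \<le> s * (L0 / L1 + d) / 2"
proof -
  have "s\<^sup>2 * L1 \<le> s"
    using assms mult_left_le[of "s * L1" s] by (simp add: power2_eq_square mult.assoc)
  then have sq: "s\<^sup>2 \<le> s / L1" using assms(2) by (simp add: field_simps)
  have "(L0 + L1 * d) * n\<^sup>2 \<le> (L0 + L1 * d) * s\<^sup>2"
    using assms by (intro mult_left_mono power_mono) auto
  also have "\<dots> = L0 * s\<^sup>2 + d * (s\<^sup>2 * L1)" by (simp add: algebra_simps)
  also have "\<dots> \<le> L0 * (s / L1) + d * s"
    using assms sq \<open>s\<^sup>2 * L1 \<le> s\<close> by (intro add_mono mult_left_mono) auto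
  also have "\<dots> = s * (L0 / L1 + d)" by (simp add: algebra_simps)
  finally show ?thesis by (simp add: divide_right_mono)
qed

lemma block_step_model_le:
  fixes g :: "real^'n" and u :: "nat \<Rightarrow> real^'n"
  assumes "finite S"
    and norms: "\<forall>i\<in>S. is_norm_on (block_space blk i) (N i)"
    and u: "\<forall>i\<in>S. u i \<in> block_space blk i \<and> N i (u i) \<le> 1 \<and> g \<bullet> u i = d i \<and> 0 \<le> d i"
    and steps: "\<forall>i\<in>S. 0 \<le> s i \<and> s i * L1 i \<le> 1 \<and> 0 < L1 i \<and> 0 \<le> L0 i"
  defines "\<Gamma> \<equiv> \<Sum>i\<in>S. (- s i) *\<^sub>R u i"
  shows "g \<bullet> \<Gamma> + (\<Sum>i\<in>S. (L0 i + L1 i * d i) / 2 * (N i (blk_proj blk i \<Gamma>))\<^sup>2)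
    \<le> - (\<Sum>i\<in>S. s i * (d i - L0 i / L1 i)) / 2"
proof -
  have "- s i * d i + (L0 i + L1 i * d i) / 2 * (N i (blk_proj blk i \<Gamma>))\<^sup>2
      \<le> - (s i * (d i - L0 i / L1 i)) / 2" if i: "i \<in> S" for i
  proof -
    have "blk_proj blk i \<Gamma> = (- s i) *\<^sub>R u i"
      unfolding \<Gamma>_def using u by (intro blk_proj_sum_blocks[OF \<open>finite S\<close> i]) auto
    then have "N i (blk_proj blk i \<Gamma>) = N i ((- s i) *\<^sub>R u i)" by simp
    also have "\<dots> = \<bar>- s i\<bar> * N i (u i)"
      using norms u i unfolding is_norm_on_def by blast
    also have "\<dots> = s i * N i (u i)" using steps i by simp
    finally have "0 \<le> N i (blk_proj blk i \<Gamma>)" "N i (blk_proj blk i \<Gamma>) \<le> s i"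
      using norms u steps i mult_left_le[of "N i (u i)" "s i"] by (auto simp: is_norm_on_def)
    then have "(L0 i + L1 i * d i) / 2 * (N i (blk_proj blk i \<Gamma>))\<^sup>2 \<le> s i * (L0 i / L1 i + d i) / 2"
      using u steps i by (intro quadratic_step_le) auto
    then show ?thesis by (simp add: field_simps)
  qed
  moreover have "g \<bullet> \<Gamma> = (\<Sum>i\<in>S. - s i * d i)"
    unfolding \<Gamma>_def using u by (simp add: inner_sum_right)
  ultimately show ?thesis
    by (simp add: sum.distrib[symmetric] sum_negf[symmetric] sum_divide_distrib sum_mono)
qed

theorem lemma12:
  fixes f :: "real^'n \<Rightarrow> real" and grad :: "real^'n \<Rightarrow> real^'n"
    and blk :: "'n \<Rightarrow> nat" and b :: nat
    and N :: "nat \<Rightarrow> real^'n \<Rightarrow> real"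
    and fstar :: real and D :: "nat set pmf"
    and L0 L1 :: "nat \<Rightarrow> nat set \<Rightarrow> real"
    and S :: "nat set" and x :: "nat \<Rightarrow> real" and X :: "real^'n"
  assumes blk_range: "\<forall>c. blk c < b"
    and norms: "\<forall>i<b. is_norm_on (block_space blk i) (N i)"
    and deriv: "\<forall>Y. (f has_derivative (\<lambda>h. grad Y \<bullet> h)) (at Y)"
    and grad_cont: "continuous_on UNIV grad"
    and lower: "\<forall>Y. fstar \<le> f Y"
    and D_sub: "set_pmf D \<subseteq> Pow {..<b}"
    and L_nonneg: "\<forall>i T. 0 \<le> L0 i T \<and> 0 \<le> L1 i T"
    and smooth: "\<forall>T\<in>set_pmf D. \<forall>Y \<Gamma>. (\<forall>c. blk c \<notin> T \<longrightarrow> \<Gamma> $ c = 0) \<longrightarrow>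
        f (Y + \<Gamma>) - f Y - grad Y \<bullet> \<Gamma>
          \<le> (\<Sum>i\<in>T. (L0 i T + L1 i T *
                 dual_norm_on (block_space blk i) (N i) (blk_proj blk i (grad Y))) / 2
               * (N i (blk_proj blk i \<Gamma>))\<^sup>2)"
    and L1_pos: "\<forall>i\<in>S. 0 < L1 i S"
    and S_supp: "S \<in> set_pmf D"
    and x_pos: "\<forall>i<b. 0 < x i"
  shows "(\<Sum>i\<in>S. x i * dual_norm_on (block_space blk i) (N i) (blk_proj blk i (grad X)))
     \<le> 4 * Max (insert 0 ((\<lambda>i. x i * L1 i S) ` S)) * (f X - fstar)
       + (\<Sum>i\<in>S. x i * L0 i S / L1 i S)"
proof -
  have "S \<subseteq> {..<b}" using D_sub S_supp by blast
  then have finS: "finite S" and norms_S: "\<forall>i\<in>S. is_norm_on (block_space blk i) (N i)"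
    and x_S: "\<forall>i\<in>S. 0 < x i"
    using norms x_pos finite_nat_iff_bounded by auto
  define d where "d i = dual_norm_on (block_space blk i) (N i) (blk_proj blk i (grad X))" for i
  define M where "M = Max (insert 0 ((\<lambda>i. x i * L1 i S) ` S))"
  have M_ge: "\<forall>i\<in>S. x i * L1 i S \<le> M" using finS by (simp add: M_def)
  show ?thesis
  proof (cases "S = {}")
    case True
    then show ?thesis by (simp add: M_def)
  next
    case False
    then have M_pos: "0 < M"
      using M_ge x_S L1_pos by (meson all_not_in_conv mult_pos_pos order_less_le_trans)
    obtain u where u: "\<forall>i\<in>S. u i \<in> block_space blk i \<and> N i (u i) \<le> 1
        \<and> grad X \<bullet> u i = d i \<and> 0 \<le> d i"
      using block_dual_maximizers[OF norms_S] unfolding d_def by blast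
    define \<Gamma> where "\<Gamma> = (\<Sum>i\<in>S. (- (x i / M)) *\<^sub>R u i)"
    have supp: "\<Gamma> $ c = 0" if "blk c \<notin> S" for c
      unfolding \<Gamma>_def using _ that by (rule sum_blocks_outside) (use u in simp)
    have "fstar - f X \<le> f (X + \<Gamma>) - f X" using lower by simp
    also have "\<dots> \<le> grad X \<bullet> \<Gamma>
        + (\<Sum>i\<in>S. (L0 i S + L1 i S * d i) / 2 * (N i (blk_proj blk i \<Gamma>))\<^sup>2)"
      using smooth[rule_format, OF S_supp supp, of X] unfolding d_def by simp
    also have "\<dots> \<le> - (\<Sum>i\<in>S. x i / M * (d i - L0 i S / L1 i S)) / 2"
      unfolding \<Gamma>_def using x_S M_ge M_pos L1_pos L_nonneg
      by (intro block_step_model_le[OF finS norms_S u]) (auto simp: field_simps)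
    also have "\<dots> = - ((\<Sum>i\<in>S. x i * d i) - (\<Sum>i\<in>S. x i * L0 i S / L1 i S)) / (2 * M)"
      using M_pos by (simp add: sum_subtractf[symmetric] sum_divide_distrib field_simps)
    finally have "(\<Sum>i\<in>S. x i * d i) - (\<Sum>i\<in>S. x i * L0 i S / L1 i S) \<le> 2 * M * (f X - fstar)"
      using M_pos by (simp add: field_simps)
    moreover have "0 \<le> M * (f X - fstar)" using M_pos lower by simp
    ultimately show ?thesis unfolding d_def M_def by linarith
  qed
qed

end
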